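(* Let $\{\mathcal H,\gamma,\ell,\ell^{(2)},Y\}$ be hypersurface data $(\Phi,\xi)$-embedded in a semi-Riemannian manifold $(\mathcal M,g)$, let $\eta\in\mathfrak X(\mathcal M)$, $\mathcal K=\mathcal L_\eta g$, and write $\eta|_{\Phi(\mathcal H)}=C\xi+\Phi_\star\bar\eta$ with $C\in\mathcal F(\mathcal H)$, $\bar\eta\in\mathfrak X(\mathcal H)$. Then the pullback $\mathcal K_{ab}$ of $\mathcal K$ to $\mathcal H$ satisfies $$\mathcal K_{ab}=2CY_{ab}+2\ell_{(a}\mathring\nabla_{b)}C+(\mathcal L_{\bar\eta}\gamma)_{ab}.$$
   Context: Hypersurface data: $\mathcal H$ smooth $\mathfrak n$-manifold with symmetric $(0,2)$-tensor $\gamma$, one-form $\ell$, function $\ell^{(2)}$, symmetric $(0,2)$-tensor $Y$, with $\mathcal A((W,a),(V,b))=\gamma(W,V)+a\ell(V)+b\ell(W)+ab\ell^{(2)}$ non-degenerate on each $T_p\mathcal H\times\mathbb R$. $n$, $n^{(2)}$, $P$ defined by $\gamma_{ab}n^b+n^{(2)}\ell_a=0$, $\ell_an^a+n^{(2)}\ell^{(2)}=1$, $P^{ab}\ell_b+\ell^{(2)}n^a=0$, $P^{ac}\gamma_{cb}+\ell_bn^a=\delta^a_b$; $U_{ab}=\frac12(\mathcal L_n\gamma)_{ab}+\ell_{(a}\partial_{b)}n^{(2)}$, $F=\frac12d\ell$; $\mathring\nabla$ is the torsion-free connection on $\mathcal H$ with $\mathring\nabla_a\gamma_{bc}=-\ell_cU_{ab}-\ell_bU_{ac}$,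 $\mathring\nabla_a\ell_b=F_{ab}-\ell^{(2)}U_{ab}$ (for functions $\mathring\nabla_bC=\partial_bC$). Symmetrization brackets have weight $\frac12$. $(\Phi,\xi)$-embedded: $\Phi:\mathcal H\to\mathcal M$ embedding, $\xi$ a vector field along $\Phi(\mathcal H)$ transverse to it, $\Phi^\star g=\gamma$, $\Phi^\star(g(\xi,\cdot))=\ell$, $\Phi^\star(g(\xi,\xi))=\ell^{(2)}$, $\frac12\Phi^\star(\mathcal L_\xi g)=Y$. *)

theory Defs
  imports "HOL-Analysis.Analysis"
begin

text \<open>A chart domain of the hypersurface H is an open
  set U of real^'n, a chart domain of the ambient manifold M an open set V of real^'m.
  Tensor fields are represented by their components.\<close>

definition partial :: "'i::finite \<Rightarrow> (real^'i \<Rightarrow> real) \<Rightarrow> real^'i \<Rightarrow> real" where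
  "partial i f x = deriv (\<lambda>t. f (x + t *\<^sub>R axis i 1)) 0"

fun Ck_on :: "nat \<Rightarrow> (real^'i::finite) set \<Rightarrow> (real^'i \<Rightarrow> real) \<Rightarrow> bool" where
  "Ck_on 0 U f = continuous_on U f"
| "Ck_on (Suc k) U f = ((\<forall>x\<in>U. f differentiable (at x)) \<and> (\<forall>i. Ck_on k U (partial i f)))"

definition smooth_fun_on :: "(real^'i::finite) set \<Rightarrow> (real^'i \<Rightarrow> real) \<Rightarrow> bool" where
  "smooth_fun_on U f = (\<forall>k. Ck_on k U f)"

definition smooth_vec_on :: "(real^'i::finite) set \<Rightarrow> (real^'i \<Rightarrow> real^'j::finite) \<Rightarrow> bool" where
  "smooth_vec_on U f = (\<forall>j. smooth_fun_on U (\<lambda>x. f x $ j))"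

definition smooth_mat_on :: "(real^'i::finite) set \<Rightarrow> (real^'i \<Rightarrow> real^'j^'j::finite) \<Rightarrow> bool" where
  "smooth_mat_on U f = (\<forall>j k. smooth_fun_on U (\<lambda>x. f x $ j $ k))"

definition tang :: "(real^'n::finite \<Rightarrow> real^'m::finite) \<Rightarrow> 'n \<Rightarrow> real^'n \<Rightarrow> real^'m" where
  "tang \<Phi> a x = (\<chi> \<mu>. partial a (\<lambda>y. \<Phi> y $ \<mu>) x)"

definition gmet :: "real^'m^'m \<Rightarrow> real^'m \<Rightarrow> real^'m::finite \<Rightarrow> real" where
  "gmet G v w = (\<Sum>\<mu>\<in>UNIV. \<Sum>\<nu>\<in>UNIV. v $ \<mu> * G $ \<mu> $ \<nu> * w $ \<nu>)"

definition semi_riemannian_on :: "(real^'m::finite) set \<Rightarrow> (real^'m \<Rightarrow> real^'m^'m) \<Rightarrow> bool" where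
  "semi_riemannian_on V g = (open V \<and> smooth_mat_on V g \<and>
     (\<forall>p\<in>V. transpose (g p) = g p \<and> det (g p) \<noteq> 0))"

definition embedding_on :: "(real^'n::finite) set \<Rightarrow> (real^'n \<Rightarrow> real^'m::finite) \<Rightarrow> bool" where
  "embedding_on U \<Phi> = (open U \<and> smooth_vec_on U \<Phi> \<and> inj_on \<Phi> U \<and>
     continuous_on (\<Phi> ` U) (inv_into U \<Phi>) \<and>
     (\<forall>x\<in>U. independent (range (\<lambda>a. tang \<Phi> a x)) \<and> inj (\<lambda>a. tang \<Phi> a x)))"

definition transverse_on :: "(real^'n::finite) set \<Rightarrow> (real^'n \<Rightarrow> real^'m::finite) \<Rightarrow> (real^'n \<Rightarrow> real^'m) \<Rightarrow> bool" where
  "transverse_on U \<Phi> \<xi> = (\<forall>x\<in>U. \<xi> x \<notin> span (range (\<lambda>a. tang \<Phi> a x)))"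

definition lie_metric :: "(real^'m::finite \<Rightarrow> real^'m) \<Rightarrow> (real^'m \<Rightarrow> real^'m^'m) \<Rightarrow> real^'m \<Rightarrow> 'm \<Rightarrow> 'm \<Rightarrow> real" where
  "lie_metric \<eta> g p \<mu> \<nu> = (\<Sum>\<rho>\<in>UNIV.
      \<eta> p $ \<rho> * partial \<rho> (\<lambda>q. g q $ \<mu> $ \<nu>) p
    + g p $ \<rho> $ \<nu> * partial \<mu> (\<lambda>q. \<eta> q $ \<rho>) p
    + g p $ \<mu> $ \<rho> * partial \<nu> (\<lambda>q. \<eta> q $ \<rho>) p)"

definition pullback2 :: "(real^'n::finite \<Rightarrow> real^'m::finite) \<Rightarrow> (real^'m \<Rightarrow> 'm \<Rightarrow> 'm \<Rightarrow> real) \<Rightarrow> real^'n \<Rightarrow> 'n \<Rightarrow> 'n \<Rightarrow> real" where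
  "pullback2 \<Phi> K x a b = (\<Sum>\<mu>\<in>UNIV. \<Sum>\<nu>\<in>UNIV. tang \<Phi> a x $ \<mu> * K (\<Phi> x) \<mu> \<nu> * tang \<Phi> b x $ \<nu>)"

text \<open>\<open>1/2 \<Phi>^\<star>(\<L>_\<xi> g)\<close> for a vector field \<xi> along \<Phi>(H) (given as a function on H);
  this is the coordinate expression of the pullback, which does not depend on the
  extension of \<xi> off \<Phi>(H).\<close>
definition transverse_Y :: "(real^'m::finite \<Rightarrow> real^'m^'m) \<Rightarrow> (real^'n::finite \<Rightarrow> real^'m) \<Rightarrow> (real^'n \<Rightarrow> real^'m) \<Rightarrow> real^'n \<Rightarrow> 'n \<Rightarrow> 'n \<Rightarrow> real" where
  "transverse_Y g \<Phi> \<xi> x a b = (1/2) *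
     ((\<Sum>\<rho>\<in>UNIV. \<Sum>\<mu>\<in>UNIV. \<Sum>\<nu>\<in>UNIV.
         \<xi> x $ \<rho> * partial \<rho> (\<lambda>q. g q $ \<mu> $ \<nu>) (\<Phi> x) * tang \<Phi> a x $ \<mu> * tang \<Phi> b x $ \<nu>)
    + (\<Sum>\<rho>\<in>UNIV. \<Sum>\<nu>\<in>UNIV. g (\<Phi> x) $ \<rho> $ \<nu> * partial a (\<lambda>y. \<xi> y $ \<rho>) x * tang \<Phi> b x $ \<nu>)
    + (\<Sum>\<mu>\<in>UNIV. \<Sum>\<rho>\<in>UNIV. g (\<Phi> x) $ \<mu> $ \<rho> * tang \<Phi> a x $ \<mu> * partial b (\<lambda>y. \<xi> y $ \<rho>) x))"

definition lie2 :: "(real^'n::finite \<Rightarrow> real^'n) \<Rightarrow> (real^'n \<Rightarrow> 'n \<Rightarrow> 'n \<Rightarrow> real) \<Rightarrow> real^'n \<Rightarrow> 'n \<Rightarrow> 'n \<Rightarrow> real" where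
  "lie2 V T x a b = (\<Sum>c\<in>UNIV.
      V x $ c * partial c (\<lambda>y. T y a b) x
    + T x c b * partial a (\<lambda>y. V y $ c) x
    + T x a c * partial b (\<lambda>y. V y $ c) x)"

definition hypersurface_data_on :: "(real^'n::finite) set \<Rightarrow> (real^'n \<Rightarrow> 'n \<Rightarrow> 'n \<Rightarrow> real) \<Rightarrow> (real^'n \<Rightarrow> 'n \<Rightarrow> real) \<Rightarrow> (real^'n \<Rightarrow> real) \<Rightarrow> (real^'n \<Rightarrow> 'n \<Rightarrow> 'n \<Rightarrow> real) \<Rightarrow> bool" where
  "hypersurface_data_on U \<gamma> l l2 Y = (open U \<and>
     (\<forall>a b. smooth_fun_on U (\<lambda>x. \<gamma> x a b) \<and> smooth_fun_on U (\<lambda>x. Y x a b)) \<and>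
     (\<forall>a. smooth_fun_on U (\<lambda>x. l x a)) \<and> smooth_fun_on U l2 \<and>
     (\<forall>x\<in>U. (\<forall>a b. \<gamma> x a b = \<gamma> x b a \<and> Y x a b = Y x b a) \<and>
        (\<forall>W :: real^'n. \<forall>s :: real.
           (\<forall>V :: real^'n. \<forall>t :: real.
              (\<Sum>a\<in>UNIV. \<Sum>b\<in>UNIV. \<gamma> x a b * W $ a * V $ b)
              + s * (\<Sum>b\<in>UNIV. l x b * V $ b) + t * (\<Sum>a\<in>UNIV. l x a * W $ a)
              + s * t * l2 x = 0) \<longrightarrow> W = 0 \<and> s = 0)))"

definition embedded_data_on :: "(real^'n::finite) set \<Rightarrow> (real^'n \<Rightarrow> 'n \<Rightarrow> 'n \<Rightarrow> real) \<Rightarrow> (real^'n \<Rightarrow> 'n \<Rightarrow> real) \<Rightarrow> (real^'n \<Rightarrow> real) \<Rightarrow> (real^'n \<Rightarrow> 'n \<Rightarrow> 'n \<Rightarrow> real)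
    \<Rightarrow> (real^'m::finite) set \<Rightarrow> (real^'m \<Rightarrow> real^'m^'m) \<Rightarrow> (real^'n \<Rightarrow> real^'m) \<Rightarrow> (real^'n \<Rightarrow> real^'m) \<Rightarrow> bool" where
  "embedded_data_on U \<gamma> l l2 Y V g \<Phi> \<xi> = (
     embedding_on U \<Phi> \<and> \<Phi> ` U \<subseteq> V \<and> smooth_vec_on U \<xi> \<and> transverse_on U \<Phi> \<xi> \<and>
     (\<forall>x\<in>U. (\<forall>a b. \<gamma> x a b = gmet (g (\<Phi> x)) (tang \<Phi> a x) (tang \<Phi> b x)) \<and>
        (\<forall>a. l x a = gmet (g (\<Phi> x)) (\<xi> x) (tang \<Phi> a x)) \<and>
        l2 x = gmet (g (\<Phi> x)) (\<xi> x) (\<xi> x) \<and>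
        (\<forall>a b. Y x a b = transverse_Y g \<Phi> \<xi> x a b)))"

end

theory Submission
  imports Defs
begin

text \<open>Write \<open>L(W)\<close> (\<open>lie_pullback\<close>) for the coordinate expression of \<open>\<Phi>\<^sup>\<star>(\<L>\<^sub>W g)\<close>, defined for any vector
  field W along \<open>\<Phi>(H)\<close>. By the chain rule \<open>\<Phi>\<^sup>\<star>(\<L>\<^sub>\<eta> g) = L(\<eta> \<circ> \<Phi>)\<close>, and \<open>L(\<xi>) = 2Y\<close> by
  definition of Y. L is additive and obeys the Leibniz rule
  \<open>L(f W)\<^sub>a\<^sub>b = f L(W)\<^sub>a\<^sub>b + \<partial>\<^sub>af g(W, \<Phi>\<^sub>\<star>\<partial>\<^sub>b) + \<partial>\<^sub>bf g(\<Phi>\<^sub>\<star>\<partial>\<^sub>a, W)\<close>, and on the tangent fields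
  the symmetry of second derivatives of \<Phi> gives \<open>L(\<Phi>\<^sub>\<star>\<partial>\<^sub>c)\<^sub>a\<^sub>b = \<partial>\<^sub>c\<gamma>\<^sub>a\<^sub>b\<close>. Expanding
  \<open>\<eta> \<circ> \<Phi> = C\<xi> + \<eta>bar\<^sup>c \<Phi>\<^sub>\<star>\<partial>\<^sub>c\<close> therefore yields the formula, the \<open>\<eta>bar\<close>-terms assembling into
  \<open>\<L>\<^sub>\<eta>bar \<gamma>\<close>.\<close>

section \<open>Partial derivatives\<close>

lemma has_real_derivative_along_line:
  assumes "(f has_derivative f') (at (x + t *\<^sub>R v))"
  shows "((\<lambda>s. f (x + s *\<^sub>R v)) has_real_derivative f' v) (at t)"
proof -
  have line: "((\<lambda>s::real. x + s *\<^sub>R v) has_derivative (\<lambda>s. s *\<^sub>R v)) (at t)"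
    by (auto intro!: derivative_eq_intros)
  have "(\<lambda>s. f' (s *\<^sub>R v)) = (*) (f' v)"
    using has_derivative_bounded_linear[OF assms]
    by (auto simp: bounded_linear.linear linear_scale mult.commute)
  then show ?thesis
    using has_derivative_compose[OF line assms] by (simp add: has_field_derivative_def)
qed

lemma partial_eq_derivative:
  assumes "(f has_derivative f') (at x)"
  shows "partial i f x = f' (axis i 1)"
  using has_real_derivative_along_line[of f f' x 0] assms
  by (simp add: partial_def DERIV_imp_deriv)

lemma has_real_derivative_partial_along_axis:
  assumes "f differentiable (at (x + t *\<^sub>R axis i 1))"
  shows "((\<lambda>s. f (x + s *\<^sub>R axis i 1)) has_real_derivative partial i f (x + t *\<^sub>R axis i 1)) (at t)"
proof -
  obtain f' where "(f has_derivative f') (at (x + t *\<^sub>R axis i 1))"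
    using assms by (auto simp: differentiable_def)
  then show ?thesis
    using has_real_derivative_along_line[of f f'] partial_eq_derivative[of f f'] by simp
qed

lemma partial_cong_open:
  assumes "open U" "x \<in> U" "\<And>y. y \<in> U \<Longrightarrow> f y = g y"
  shows "partial i f x = partial i g x"
proof -
  have "((\<lambda>t. x + t *\<^sub>R axis i 1) \<longlongrightarrow> x) (nhds (0::real))"
    by (auto intro!: tendsto_eq_intros filterlim_ident)
  then have "\<forall>\<^sub>F t in nhds 0. x + t *\<^sub>R axis i 1 \<in> U"
    using assms(1,2) by (rule topological_tendstoD)
  then have "\<forall>\<^sub>F t in nhds 0. f (x + t *\<^sub>R axis i 1) = g (x + t *\<^sub>R axis i 1)"
    by (rule eventually_mono) (rule assms(3))
  then show ?thesis
    unfolding partial_def by (rule deriv_cong_ev) simp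
qed

lemma partial_const: "partial i (\<lambda>y. c) x = 0"
  using partial_eq_derivative[of "\<lambda>y. c" "\<lambda>_. 0"] by simp

lemma partial_add:
  assumes "f differentiable (at x)" "g differentiable (at x)"
  shows "partial i (\<lambda>y. f y + g y) x = partial i f x + partial i g x"
proof -
  obtain f' g' where f': "(f has_derivative f') (at x)" and g': "(g has_derivative g') (at x)"
    using assms by (auto simp: differentiable_def)
  show ?thesis
    using partial_eq_derivative[OF has_derivative_add[OF f' g']]
      partial_eq_derivative[OF f'] partial_eq_derivative[OF g'] by simp
qed

lemma partial_mult:
  assumes "f differentiable (at x)" "g differentiable (at x)"
  shows "partial i (\<lambda>y. f y * g y) x = partial i f x * g x + f x * partial i g x"
proof -
  obtain f' g' where f': "(f has_derivative f') (at x)" and g': "(g has_derivative g') (at x)"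
    using assms by (auto simp: differentiable_def)
  show ?thesis
    using partial_eq_derivative[OF has_derivative_mult[OF f' g']]
      partial_eq_derivative[OF f'] partial_eq_derivative[OF g'] by simp
qed

lemma partial_sum:
  assumes "finite S" "\<And>k. k \<in> S \<Longrightarrow> f k differentiable (at x)"
  shows "partial i (\<lambda>y. \<Sum>k\<in>S. f k y) x = (\<Sum>k\<in>S. partial i (f k) x)"
  using assms
proof (induction S rule: finite_induct)
  case empty
  show ?case by (simp add: partial_const)
next
  case (insert k S)
  then show ?case
    by (simp add: partial_add)
qed

lemma differentiable_vec_nth:
  "f differentiable (at x) \<Longrightarrow> (\<lambda>y. f y $ i) differentiable (at x)"
  unfolding differentiable_def
  using bounded_linear.has_derivative[OF bounded_linear_vec_nth] by blast

lemma differentiable_vec_lambda: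
  fixes f :: "'a::real_normed_vector \<Rightarrow> 'b::euclidean_space^'m::finite"
  assumes "\<And>i. (\<lambda>y. f y $ i) differentiable (at x)"
  shows "f differentiable (at x)"
proof -
  have "(\<lambda>y. f y $ i \<bullet> u) differentiable (at x)" for i u
    using differentiable_chain_at[OF assms bounded_linear_imp_differentiable[OF bounded_linear_inner_left]]
    by (simp add: o_def)
  then show ?thesis
    by (subst differentiable_componentwise_within) (auto simp: Basis_vec_def inner_axis)
qed

lemma partial_comp:
  fixes \<Phi> :: "real^'n::finite \<Rightarrow> real^'m::finite"
  assumes "\<Phi> differentiable (at x)" "h differentiable (at (\<Phi> x))"
  shows "partial i (\<lambda>y. h (\<Phi> y)) x = (\<Sum>\<rho>\<in>UNIV. partial i (\<lambda>y. \<Phi> y $ \<rho>) x * partial \<rho> h (\<Phi> x))"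
proof -
  obtain \<Phi>' h' where \<Phi>': "(\<Phi> has_derivative \<Phi>') (at x)" and h': "(h has_derivative h') (at (\<Phi> x))"
    using assms by (auto simp: differentiable_def)
  have "partial i (\<lambda>y. h (\<Phi> y)) x = h' (\<Phi>' (axis i 1))"
    using partial_eq_derivative[OF has_derivative_compose[OF \<Phi>' h']] .
  also have "\<dots> = h' (\<Sum>\<rho>\<in>UNIV. \<Phi>' (axis i 1) $ \<rho> *\<^sub>R axis \<rho> 1)"
    using basis_expansion[of "\<Phi>' (axis i 1)"] by (simp add: scalar_mult_eq_scaleR)
  also have "\<dots> = (\<Sum>\<rho>\<in>UNIV. \<Phi>' (axis i 1) $ \<rho> * h' (axis \<rho> 1))"
    using has_derivative_linear[OF h'] by (simp add: linear_sum linear_scale)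
  also have "\<dots> = (\<Sum>\<rho>\<in>UNIV. partial i (\<lambda>y. \<Phi> y $ \<rho>) x * partial \<rho> h (\<Phi> x))"
    using partial_eq_derivative[OF bounded_linear.has_derivative[OF bounded_linear_vec_nth \<Phi>']]
      partial_eq_derivative[OF h'] by simp
  finally show ?thesis .
qed

section \<open>Symmetry of second partial derivatives\<close>

definition second_difference :: "(real^'n::finite \<Rightarrow> real) \<Rightarrow> real^'n \<Rightarrow> 'n \<Rightarrow> 'n \<Rightarrow> real \<Rightarrow> real" where
  "second_difference f x i j h =
     f (x + h *\<^sub>R axis i 1 + h *\<^sub>R axis j 1) - f (x + h *\<^sub>R axis i 1) - f (x + h *\<^sub>R axis j 1) + f x"

lemma second_difference_commute: "second_difference f x i j h = second_difference f x j i h"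
  by (simp add: second_difference_def add_ac)

lemma second_difference_mean_value:
  assumes h: "0 < h"
    and square: "\<And>s t. 0 \<le> s \<Longrightarrow> s \<le> h \<Longrightarrow> 0 \<le> t \<Longrightarrow> t \<le> h \<Longrightarrow> x + s *\<^sub>R axis i 1 + t *\<^sub>R axis j 1 \<in> U"
    and df: "\<And>y. y \<in> U \<Longrightarrow> f differentiable (at y)"
    and dfi: "\<And>y. y \<in> U \<Longrightarrow> partial i f differentiable (at y)"
  obtains s t where "0 < s" "s < h" "0 < t" "t < h"
    "second_difference f x i j h = h\<^sup>2 * partial j (partial i f) (x + s *\<^sub>R axis i 1 + t *\<^sub>R axis j 1)"
proof -
  define u where "u s = f (x + h *\<^sub>R axis j 1 + s *\<^sub>R axis i 1) - f (x + s *\<^sub>R axis i 1)" for s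
  define u' where "u' s = partial i f (x + h *\<^sub>R axis j 1 + s *\<^sub>R axis i 1) - partial i f (x + s *\<^sub>R axis i 1)" for s
  have "(u has_real_derivative u' s) (at s)" if "0 \<le> s" "s \<le> h" for s
    unfolding u_def u'_def using square[of s h] square[of s 0] that h
    by (intro DERIV_diff has_real_derivative_partial_along_axis df) (auto simp: add_ac)
  with MVT2[OF h, of u u'] obtain s where s: "0 < s" "s < h"
    and u: "u h - u 0 = h * (partial i f (x + h *\<^sub>R axis j 1 + s *\<^sub>R axis i 1) - partial i f (x + s *\<^sub>R axis i 1))"
    by (auto simp: u'_def)
  define w where "w t = partial i f (x + s *\<^sub>R axis i 1 + t *\<^sub>R axis j 1)" for t
  define w' where "w' t = partial j (partial i f) (x + s *\<^sub>R axis i 1 + t *\<^sub>R axis j 1)" for t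
  have "(w has_real_derivative w' t) (at t)" if "0 \<le> t" "t \<le> h" for t
    unfolding w_def w'_def using square[of s t] that s
    by (intro has_real_derivative_partial_along_axis dfi) auto
  with MVT2[OF h, of w w'] obtain t where t: "0 < t" "t < h"
    and w: "w h - w 0 = h * partial j (partial i f) (x + s *\<^sub>R axis i 1 + t *\<^sub>R axis j 1)"
    by (auto simp: w'_def)
  have "second_difference f x i j h = u h - u 0"
    by (simp add: second_difference_def u_def add_ac)
  also have "\<dots> = h * (w h - w 0)"
    using u by (simp add: w_def add_ac)
  finally show ?thesis
    using that s t w by (simp add: power2_eq_square)
qed

lemma norm_scaleR_axis_add_le:
  "norm (s *\<^sub>R axis i 1 + t *\<^sub>R axis j 1 :: real^'n::finite) \<le> \<bar>s\<bar> + \<bar>t\<bar>"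
  by (rule order_trans[OF norm_triangle_ineq]) simp

lemma second_difference_tendsto:
  assumes U: "open U" "x \<in> U" and f: "Ck_on 2 U f"
  shows "((\<lambda>h. second_difference f x i j h / h\<^sup>2) \<longlongrightarrow> partial j (partial i f) x) (at_right 0)"
proof (rule tendstoI)
  fix e :: real assume "e > 0"
  have "continuous (at x) (partial j (partial i f))"
    using f U by (simp add: numeral_2_eq_2 continuous_on_eq_continuous_at)
  with \<open>e > 0\<close> obtain \<delta> where "\<delta> > 0"
    and \<delta>: "\<And>p. dist p x < \<delta> \<Longrightarrow> dist (partial j (partial i f) p) (partial j (partial i f) x) < e"
    unfolding continuous_at_eps_delta by blast
  obtain r where "r > 0" and r: "ball x r \<subseteq> U"
    using U openE by blast
  show "\<forall>\<^sub>F h in at_right 0. dist (second_difference f x i j h / h\<^sup>2) (partial j (partial i f) x) < e"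
  proof (rule eventually_at_rightI)
    fix h assume h: "h \<in> {0<..<min \<delta> r / 2}"
    have near: "dist (x + s *\<^sub>R axis i 1 + t *\<^sub>R axis j 1) x < min \<delta> r"
      if "0 \<le> s" "s \<le> h" "0 \<le> t" "t \<le> h" for s t
      using norm_scaleR_axis_add_le[of s i t j] that h by (simp add: dist_norm)
    have square: "x + s *\<^sub>R axis i 1 + t *\<^sub>R axis j 1 \<in> U"
      if "0 \<le> s" "s \<le> h" "0 \<le> t" "t \<le> h" for s t
      using near[OF that] r by (auto simp: dist_commute)
    obtain s t where "0 < s" "s < h" "0 < t" "t < h" and
      diff: "second_difference f x i j h = h\<^sup>2 * partial j (partial i f) (x + s *\<^sub>R axis i 1 + t *\<^sub>R axis j 1)"
      using second_difference_mean_value[of h x i j U f] h square f by (auto simp: numeral_2_eq_2)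
    then show "dist (second_difference f x i j h / h\<^sup>2) (partial j (partial i f) x) < e"
      using h \<delta> near[of s t] by simp
  qed (use \<open>\<delta> > 0\<close> \<open>r > 0\<close> in simp)
qed

lemma partial_partial_commute:
  assumes "open U" "x \<in> U" "Ck_on 2 U f"
  shows "partial j (partial i f) x = partial i (partial j f) x"
proof -
  have "((\<lambda>h. second_difference f x i j h / h\<^sup>2) \<longlongrightarrow> partial i (partial j f) x) (at_right 0)"
    using second_difference_tendsto[OF assms, of j i] unfolding second_difference_commute[of f x j i] .
  with second_difference_tendsto[OF assms, of i j] show ?thesis
    using tendsto_unique[OF trivial_limit_at_right_real] by blast
qed

section \<open>Vector and matrix fields\<close>

lemma smooth_fun_on_differentiable: "smooth_fun_on U f \<Longrightarrow> x \<in> U \<Longrightarrow> f differentiable (at x)"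
  unfolding smooth_fun_on_def by (metis Ck_on.simps(2))

lemma smooth_fun_on_partial: "smooth_fun_on U f \<Longrightarrow> smooth_fun_on U (partial i f)"
  unfolding smooth_fun_on_def by (metis Ck_on.simps(2))

lemma smooth_vec_on_differentiable: "smooth_vec_on U f \<Longrightarrow> x \<in> U \<Longrightarrow> f differentiable (at x)"
  unfolding smooth_vec_on_def by (intro differentiable_vec_lambda) (auto intro: smooth_fun_on_differentiable)

lemma smooth_mat_on_differentiable: "smooth_mat_on U f \<Longrightarrow> x \<in> U \<Longrightarrow> f differentiable (at x)"
  unfolding smooth_mat_on_def by (intro differentiable_vec_lambda) (auto intro: smooth_fun_on_differentiable)

lemma smooth_vec_on_tang: "smooth_vec_on U \<Phi> \<Longrightarrow> smooth_vec_on U (tang \<Phi> a)"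
  by (simp add: smooth_vec_on_def tang_def smooth_fun_on_partial)

lemma tang_const: "tang (\<lambda>y. v) a x = 0"
  by (simp add: tang_def vec_eq_iff partial_const)

lemma tang_add:
  assumes "W differentiable (at x)" "Z differentiable (at x)"
  shows "tang (\<lambda>y. W y + Z y) a x = tang W a x + tang Z a x"
  using assms by (simp add: tang_def vec_eq_iff partial_add differentiable_vec_nth)

lemma tang_scaleR:
  assumes "f differentiable (at x)" "W differentiable (at x)"
  shows "tang (\<lambda>y. f y *\<^sub>R W y) a x = partial a f x *\<^sub>R W x + f x *\<^sub>R tang W a x"
  using assms by (simp add: tang_def vec_eq_iff partial_mult differentiable_vec_nth)

lemma tang_cong_open:
  assumes "open U" "x \<in> U" "\<And>y. y \<in> U \<Longrightarrow> W y = Z y"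
  shows "tang W a x = tang Z a x"
  using assms by (simp add: tang_def vec_eq_iff partial_cong_open[of U x "\<lambda>y. W y $ _" "\<lambda>y. Z y $ _"])

lemma tang_comp:
  assumes "\<Phi> differentiable (at x)" "\<eta> differentiable (at (\<Phi> x))"
  shows "tang (\<lambda>y. \<eta> (\<Phi> y)) a x = (\<chi> \<rho>. \<Sum>\<mu>\<in>UNIV. tang \<Phi> a x $ \<mu> * partial \<mu> (\<lambda>q. \<eta> q $ \<rho>) (\<Phi> x))"
  using partial_comp[OF assms(1) differentiable_vec_nth[OF assms(2)]] by (simp add: tang_def vec_eq_iff)

lemma tang_tang_commute:
  assumes "open U" "x \<in> U" "smooth_vec_on U \<Phi>"
  shows "tang (tang \<Phi> c) a x = tang (tang \<Phi> a) c x"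
  using assms partial_partial_commute[OF assms(1,2)]
  by (simp add: tang_def vec_eq_iff smooth_vec_on_def smooth_fun_on_def)

definition mat_partial :: "'n \<Rightarrow> (real^'n::finite \<Rightarrow> real^'m^'m::finite) \<Rightarrow> real^'n \<Rightarrow> real^'m^'m" where
  "mat_partial c M x = (\<chi> \<mu> \<nu>. partial c (\<lambda>y. M y $ \<mu> $ \<nu>) x)"

definition mat_dir_deriv :: "(real^'m::finite \<Rightarrow> real^'m^'m) \<Rightarrow> real^'m \<Rightarrow> real^'m \<Rightarrow> real^'m^'m" where
  "mat_dir_deriv g p w = (\<chi> \<mu> \<nu>. \<Sum>\<rho>\<in>UNIV. w $ \<rho> * partial \<rho> (\<lambda>q. g q $ \<mu> $ \<nu>) p)"

lemma mat_partial_comp: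
  assumes "\<Phi> differentiable (at x)" "g differentiable (at (\<Phi> x))"
  shows "mat_partial c (\<lambda>y. g (\<Phi> y)) x = mat_dir_deriv g (\<Phi> x) (tang \<Phi> c x)"
  using partial_comp[OF assms(1) differentiable_vec_nth[OF differentiable_vec_nth[OF assms(2)]]]
  by (simp add: mat_partial_def mat_dir_deriv_def tang_def vec_eq_iff)

lemma sum_reverse3:
  "(\<Sum>x\<in>A. \<Sum>y\<in>B. \<Sum>z\<in>C. f x y z) = (\<Sum>z\<in>C. \<Sum>y\<in>B. \<Sum>x\<in>A. f x y z)"
proof -
  have "(\<Sum>x\<in>A. \<Sum>y\<in>B. \<Sum>z\<in>C. f x y z) = (\<Sum>y\<in>B. \<Sum>x\<in>A. \<Sum>z\<in>C. f x y z)"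
    by (rule sum.swap)
  also have "\<dots> = (\<Sum>y\<in>B. \<Sum>z\<in>C. \<Sum>x\<in>A. f x y z)"
    by (rule sum.cong[OF refl], rule sum.swap)
  also have "\<dots> = (\<Sum>z\<in>C. \<Sum>y\<in>B. \<Sum>x\<in>A. f x y z)"
    by (rule sum.swap)
  finally show ?thesis .
qed

lemma gmet_contract_left:
  "(\<Sum>\<mu>\<in>UNIV. \<Sum>\<nu>\<in>UNIV. u $ \<mu> * (\<Sum>\<rho>\<in>UNIV. G $ \<rho> $ \<nu> * D \<mu> \<rho>) * w $ \<nu>)
     = gmet G (\<chi> \<rho>. \<Sum>\<mu>\<in>UNIV. u $ \<mu> * D \<mu> \<rho>) w"
proof -
  have "(\<Sum>\<mu>\<in>UNIV. \<Sum>\<nu>\<in>UNIV. u $ \<mu> * (\<Sum>\<rho>\<in>UNIV. G $ \<rho> $ \<nu> * D \<mu> \<rho>) * w $ \<nu>)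
      = (\<Sum>\<mu>\<in>UNIV. \<Sum>\<nu>\<in>UNIV. \<Sum>\<rho>\<in>UNIV. u $ \<mu> * D \<mu> \<rho> * G $ \<rho> $ \<nu> * w $ \<nu>)"
    by (simp add: sum_distrib_left sum_distrib_right ac_simps)
  also have "\<dots> = (\<Sum>\<rho>\<in>UNIV. \<Sum>\<nu>\<in>UNIV. \<Sum>\<mu>\<in>UNIV. u $ \<mu> * D \<mu> \<rho> * G $ \<rho> $ \<nu> * w $ \<nu>)"
    by (rule sum_reverse3)
  also have "\<dots> = gmet G (\<chi> \<rho>. \<Sum>\<mu>\<in>UNIV. u $ \<mu> * D \<mu> \<rho>) w"
    by (simp add: gmet_def sum_distrib_right)
  finally show ?thesis .
qed

lemma gmet_contract_right:
  "(\<Sum>\<mu>\<in>UNIV. \<Sum>\<nu>\<in>UNIV. u $ \<mu> * (\<Sum>\<rho>\<in>UNIV. G $ \<mu> $ \<rho> * D \<nu> \<rho>) * w $ \<nu>)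
     = gmet G u (\<chi> \<rho>. \<Sum>\<nu>\<in>UNIV. w $ \<nu> * D \<nu> \<rho>)"
  unfolding gmet_def
proof (rule sum.cong[OF refl])
  fix \<mu>
  have "(\<Sum>\<nu>\<in>UNIV. u $ \<mu> * (\<Sum>\<rho>\<in>UNIV. G $ \<mu> $ \<rho> * D \<nu> \<rho>) * w $ \<nu>)
      = (\<Sum>\<nu>\<in>UNIV. \<Sum>\<rho>\<in>UNIV. u $ \<mu> * G $ \<mu> $ \<rho> * (w $ \<nu> * D \<nu> \<rho>))"
    by (simp add: sum_distrib_left sum_distrib_right ac_simps)
  also have "\<dots> = (\<Sum>\<rho>\<in>UNIV. \<Sum>\<nu>\<in>UNIV. u $ \<mu> * G $ \<mu> $ \<rho> * (w $ \<nu> * D \<nu> \<rho>))"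
    by (rule sum.swap)
  also have "\<dots> = (\<Sum>\<rho>\<in>UNIV. u $ \<mu> * G $ \<mu> $ \<rho> * (\<chi> \<rho>. \<Sum>\<nu>\<in>UNIV. w $ \<nu> * D \<nu> \<rho>) $ \<rho>)"
    by (simp add: sum_distrib_left)
  finally show "(\<Sum>\<nu>\<in>UNIV. u $ \<mu> * (\<Sum>\<rho>\<in>UNIV. G $ \<mu> $ \<rho> * D \<nu> \<rho>) * w $ \<nu>)
      = (\<Sum>\<rho>\<in>UNIV. u $ \<mu> * G $ \<mu> $ \<rho> * (\<chi> \<rho>. \<Sum>\<nu>\<in>UNIV. w $ \<nu> * D \<nu> \<rho>) $ \<rho>)" .
qed

lemma bilinear_gmet: "bilinear (gmet G)"
  unfolding bilinear_def
  by (auto intro!: linearI simp: gmet_def algebra_simps sum.distrib sum_distrib_left)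

lemma linear_gmet_mat_dir_deriv: "linear (\<lambda>w. gmet (mat_dir_deriv g p w) u v)"
  by (auto intro!: linearI simp: gmet_def mat_dir_deriv_def algebra_simps sum.distrib sum_distrib_left)

lemma gmet_commute:
  assumes "transpose G = G"
  shows "gmet G v w = gmet G w v"
proof -
  have "G $ \<mu> $ \<nu> = G $ \<nu> $ \<mu>" for \<mu> \<nu>
    using assms by (metis transpose_def vec_lambda_beta)
  then show ?thesis
    unfolding gmet_def by (subst sum.swap) (simp add: ac_simps)
qed

lemma partial_gmet:
  assumes M: "M differentiable (at x)" and v: "v differentiable (at x)" and w: "w differentiable (at x)"
  shows "partial c (\<lambda>y. gmet (M y) (v y) (w y)) x
    = gmet (mat_partial c M x) (v x) (w x) + gmet (M x) (tang v c x) (w x) + gmet (M x) (v x) (tang w c x)"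
proof -
  have dM: "(\<lambda>y. M y $ \<mu> $ \<nu>) differentiable (at x)" for \<mu> \<nu>
    using differentiable_vec_nth[OF differentiable_vec_nth[OF M]] .
  have dv: "(\<lambda>y. v y $ \<mu>) differentiable (at x)" and dw: "(\<lambda>y. w y $ \<mu>) differentiable (at x)" for \<mu>
    using v w by (simp_all add: differentiable_vec_nth)
  have "partial c (\<lambda>y. gmet (M y) (v y) (w y)) x
      = (\<Sum>\<mu>\<in>UNIV. \<Sum>\<nu>\<in>UNIV. partial c (\<lambda>y. v y $ \<mu> * M y $ \<mu> $ \<nu> * w y $ \<nu>) x)"
    unfolding gmet_def using dM dv dw by (simp add: partial_sum)
  also have "\<dots> = (\<Sum>\<mu>\<in>UNIV. \<Sum>\<nu>\<in>UNIV. partial c (\<lambda>y. v y $ \<mu>) x * M x $ \<mu> $ \<nu> * w x $ \<nu>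
      + v x $ \<mu> * partial c (\<lambda>y. M y $ \<mu> $ \<nu>) x * w x $ \<nu> + v x $ \<mu> * M x $ \<mu> $ \<nu> * partial c (\<lambda>y. w y $ \<nu>) x)"
    using dM dv dw by (simp add: partial_mult algebra_simps)
  also have "\<dots> = gmet (mat_partial c M x) (v x) (w x) + gmet (M x) (tang v c x) (w x) + gmet (M x) (v x) (tang w c x)"
    by (simp add: gmet_def mat_partial_def tang_def sum.distrib)
  finally show ?thesis .
qed

section \<open>The pulled-back Lie derivative of the metric\<close>

text \<open>\<open>\<Phi>\<^sup>\<star>(\<L>\<^sub>W g)\<close> in coordinates, for a vector field W along \<open>\<Phi>(H)\<close> given as a function on H:
  only derivatives of W tangent to H occur, so W needs no extension off \<open>\<Phi>(H)\<close>.\<close>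

definition lie_pullback ::
    "(real^'m::finite \<Rightarrow> real^'m^'m) \<Rightarrow> (real^'n::finite \<Rightarrow> real^'m) \<Rightarrow> (real^'n \<Rightarrow> real^'m) \<Rightarrow> real^'n \<Rightarrow> 'n \<Rightarrow> 'n \<Rightarrow> real" where
  "lie_pullback g \<Phi> W x a b =
     gmet (mat_dir_deriv g (\<Phi> x) (W x)) (tang \<Phi> a x) (tang \<Phi> b x)
   + gmet (g (\<Phi> x)) (tang W a x) (tang \<Phi> b x) + gmet (g (\<Phi> x)) (tang \<Phi> a x) (tang W b x)"

lemma transverse_Y_eq_lie_pullback: "transverse_Y g \<Phi> \<xi> x a b = lie_pullback g \<Phi> \<xi> x a b / 2"
proof -
  let ?T = "\<lambda>c. tang \<Phi> c x" and ?dg = "\<lambda>\<rho> \<mu> \<nu>. partial \<rho> (\<lambda>q. g q $ \<mu> $ \<nu>) (\<Phi> x)"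
  have "(\<Sum>\<rho>\<in>UNIV. \<Sum>\<mu>\<in>UNIV. \<Sum>\<nu>\<in>UNIV. \<xi> x $ \<rho> * ?dg \<rho> \<mu> \<nu> * ?T a $ \<mu> * ?T b $ \<nu>)
      = (\<Sum>\<nu>\<in>UNIV. \<Sum>\<mu>\<in>UNIV. \<Sum>\<rho>\<in>UNIV. \<xi> x $ \<rho> * ?dg \<rho> \<mu> \<nu> * ?T a $ \<mu> * ?T b $ \<nu>)"
    by (rule sum_reverse3)
  also have "\<dots> = (\<Sum>\<mu>\<in>UNIV. \<Sum>\<nu>\<in>UNIV. \<Sum>\<rho>\<in>UNIV. \<xi> x $ \<rho> * ?dg \<rho> \<mu> \<nu> * ?T a $ \<mu> * ?T b $ \<nu>)"
    by (rule sum.swap)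
  also have "\<dots> = gmet (mat_dir_deriv g (\<Phi> x) (\<xi> x)) (?T a) (?T b)"
    by (simp add: gmet_def mat_dir_deriv_def sum_distrib_left sum_distrib_right ac_simps)
  finally show ?thesis
    by (simp add: transverse_Y_def lie_pullback_def gmet_def tang_def ac_simps)
qed

lemma pullback2_lie_metric:
  assumes "\<Phi> differentiable (at x)" "\<eta> differentiable (at (\<Phi> x))"
  shows "pullback2 \<Phi> (lie_metric \<eta> g) x a b = lie_pullback g \<Phi> (\<lambda>y. \<eta> (\<Phi> y)) x a b"
proof -
  let ?T = "\<lambda>c. tang \<Phi> c x" and ?G = "g (\<Phi> x)" and ?D = "\<lambda>\<mu> \<rho>. partial \<mu> (\<lambda>q. \<eta> q $ \<rho>) (\<Phi> x)"
  have "pullback2 \<Phi> (lie_metric \<eta> g) x a b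
      = gmet (mat_dir_deriv g (\<Phi> x) (\<eta> (\<Phi> x))) (?T a) (?T b)
      + (\<Sum>\<mu>\<in>UNIV. \<Sum>\<nu>\<in>UNIV. ?T a $ \<mu> * (\<Sum>\<rho>\<in>UNIV. ?G $ \<rho> $ \<nu> * ?D \<mu> \<rho>) * ?T b $ \<nu>)
      + (\<Sum>\<mu>\<in>UNIV. \<Sum>\<nu>\<in>UNIV. ?T a $ \<mu> * (\<Sum>\<rho>\<in>UNIV. ?G $ \<mu> $ \<rho> * ?D \<nu> \<rho>) * ?T b $ \<nu>)"
    by (simp add: pullback2_def lie_metric_def gmet_def mat_dir_deriv_def sum.distrib distrib_left distrib_right)
  then show ?thesis
    unfolding gmet_contract_left gmet_contract_right lie_pullback_def tang_comp[OF assms] .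
qed

lemma lie_pullback_cong_open:
  assumes "open U" "x \<in> U" "\<And>y. y \<in> U \<Longrightarrow> W y = Z y"
  shows "lie_pullback g \<Phi> W x a b = lie_pullback g \<Phi> Z x a b"
  using assms by (simp add: lie_pullback_def tang_cong_open[OF assms])

lemma lie_pullback_add:
  assumes "W differentiable (at x)" "Z differentiable (at x)"
  shows "lie_pullback g \<Phi> (\<lambda>y. W y + Z y) x a b = lie_pullback g \<Phi> W x a b + lie_pullback g \<Phi> Z x a b"
  using assms
  by (simp add: lie_pullback_def tang_add linear_add[OF linear_gmet_mat_dir_deriv]
      bilinear_ladd[OF bilinear_gmet] bilinear_radd[OF bilinear_gmet])

lemma lie_pullback_sum:
  assumes "finite S" "\<And>k. k \<in> S \<Longrightarrow> W k differentiable (at x)"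
  shows "lie_pullback g \<Phi> (\<lambda>y. \<Sum>k\<in>S. W k y) x a b = (\<Sum>k\<in>S. lie_pullback g \<Phi> (W k) x a b)"
  using assms
proof (induction S rule: finite_induct)
  case empty
  show ?case
    by (simp add: lie_pullback_def tang_const linear_0[OF linear_gmet_mat_dir_deriv]
      bilinear_lzero[OF bilinear_gmet] bilinear_rzero[OF bilinear_gmet])
next
  case (insert k S)
  then show ?case
    by (simp add: lie_pullback_add)
qed

lemma lie_pullback_scaleR:
  assumes "f differentiable (at x)" "W differentiable (at x)"
  shows "lie_pullback g \<Phi> (\<lambda>y. f y *\<^sub>R W y) x a b = f x * lie_pullback g \<Phi> W x a b
    + partial a f x * gmet (g (\<Phi> x)) (W x) (tang \<Phi> b x) + partial b f x * gmet (g (\<Phi> x)) (tang \<Phi> a x) (W x)"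
  using assms
  by (simp add: lie_pullback_def tang_scaleR linear_scale[OF linear_gmet_mat_dir_deriv]
      bilinear_ladd[OF bilinear_gmet] bilinear_radd[OF bilinear_gmet]
      bilinear_lmul[OF bilinear_gmet] bilinear_rmul[OF bilinear_gmet] algebra_simps)

lemma lie_pullback_tang:
  assumes U: "open U" "x \<in> U" and \<Phi>: "smooth_vec_on U \<Phi>" and g: "g differentiable (at (\<Phi> x))"
  shows "lie_pullback g \<Phi> (tang \<Phi> c) x a b = partial c (\<lambda>y. gmet (g (\<Phi> y)) (tang \<Phi> a y) (tang \<Phi> b y)) x"
proof -
  have d\<Phi>: "\<Phi> differentiable (at x)" and dtang: "\<And>d. tang \<Phi> d differentiable (at x)"
    using \<Phi> U smooth_vec_on_differentiable smooth_vec_on_tang by blast+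
  have "(\<lambda>y. g (\<Phi> y)) differentiable (at x)"
    using differentiable_chain_at[OF d\<Phi> g] by (simp add: o_def)
  then show ?thesis
    using partial_gmet[OF _ dtang dtang] mat_partial_comp[OF d\<Phi> g] tang_tang_commute[OF U \<Phi>]
    by (simp add: lie_pullback_def)
qed

theorem proposition4p1:
  fixes U :: "(real^'n::finite) set" and V :: "(real^'m::finite) set"
    and \<gamma> Y :: "real^'n \<Rightarrow> 'n \<Rightarrow> 'n \<Rightarrow> real" and l :: "real^'n \<Rightarrow> 'n \<Rightarrow> real"
    and l2 :: "real^'n \<Rightarrow> real"
    and g :: "real^'m \<Rightarrow> real^'m^'m" and \<Phi> \<xi> :: "real^'n \<Rightarrow> real^'m"
    and \<eta> :: "real^'m \<Rightarrow> real^'m" and C :: "real^'n \<Rightarrow> real" and \<eta>bar :: "real^'n \<Rightarrow> real^'n"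
  assumes dim: "CARD('m) = CARD('n) + 1"
    and M: "semi_riemannian_on V g"
    and data: "hypersurface_data_on U \<gamma> l l2 Y"
    and emb: "embedded_data_on U \<gamma> l l2 Y V g \<Phi> \<xi>"
    and eta: "smooth_vec_on V \<eta>"
    and C: "smooth_fun_on U C" and etabar: "smooth_vec_on U \<eta>bar"
    and decomp: "\<forall>x\<in>U. \<eta> (\<Phi> x) = C x *\<^sub>R \<xi> x + (\<Sum>a\<in>UNIV. \<eta>bar x $ a *\<^sub>R tang \<Phi> a x)"
  shows "\<forall>x\<in>U. \<forall>a b. pullback2 \<Phi> (lie_metric \<eta> g) x a b
           = 2 * C x * Y x a b + l x a * partial b C x + l x b * partial a C x
             + lie2 \<eta>bar \<gamma> x a b"
proof (intro ballI allI)
  fix x a b assume x: "x \<in> U"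
  have U: "open U"
    using data by (simp add: hypersurface_data_on_def)
  have \<Phi>: "smooth_vec_on U \<Phi>" and \<xi>: "smooth_vec_on U \<xi>" and "\<Phi> x \<in> V"
    and \<gamma>: "\<And>y c d. y \<in> U \<Longrightarrow> \<gamma> y c d = gmet (g (\<Phi> y)) (tang \<Phi> c y) (tang \<Phi> d y)"
    and l: "\<And>c. l x c = gmet (g (\<Phi> x)) (\<xi> x) (tang \<Phi> c x)"
    and Y: "Y x a b = transverse_Y g \<Phi> \<xi> x a b"
    using emb x by (auto simp: embedded_data_on_def embedding_on_def)
  then have g_sym: "transpose (g (\<Phi> x)) = g (\<Phi> x)" and dg: "g differentiable (at (\<Phi> x))"
    and d\<eta>: "\<eta> differentiable (at (\<Phi> x))"
    using M eta by (auto simp: semi_riemannian_on_def smooth_mat_on_differentiable smooth_vec_on_differentiable)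
  have d\<Phi>: "\<Phi> differentiable (at x)" and d\<xi>: "\<xi> differentiable (at x)" and dC: "C differentiable (at x)"
    and d\<eta>bar: "\<And>c. (\<lambda>y. \<eta>bar y $ c) differentiable (at x)"
    using x \<Phi> \<xi> C etabar
    by (auto simp: smooth_vec_on_differentiable smooth_fun_on_differentiable differentiable_vec_nth)
  have dtang: "\<And>c. tang \<Phi> c differentiable (at x)"
    using smooth_vec_on_differentiable[OF smooth_vec_on_tang[OF \<Phi>] x] .
  have normal: "lie_pullback g \<Phi> (\<lambda>y. C y *\<^sub>R \<xi> y) x a b
      = 2 * C x * Y x a b + l x a * partial b C x + l x b * partial a C x"
    using lie_pullback_scaleR[OF dC d\<xi>] gmet_commute[OF g_sym]
    by (simp add: Y l transverse_Y_eq_lie_pullback)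
  have tangential: "lie_pullback g \<Phi> (\<lambda>y. \<eta>bar y $ c *\<^sub>R tang \<Phi> c y) x a b
      = \<eta>bar x $ c * partial c (\<lambda>y. \<gamma> y a b) x
        + \<gamma> x c b * partial a (\<lambda>y. \<eta>bar y $ c) x + \<gamma> x a c * partial b (\<lambda>y. \<eta>bar y $ c) x" for c
    using lie_pullback_scaleR[OF d\<eta>bar dtang] lie_pullback_tang[OF U x \<Phi> dg]
      partial_cong_open[OF U x \<gamma>] x
    by (simp add: \<gamma> algebra_simps)
  have "pullback2 \<Phi> (lie_metric \<eta> g) x a b = lie_pullback g \<Phi> (\<lambda>y. \<eta> (\<Phi> y)) x a b"
    by (rule pullback2_lie_metric[OF d\<Phi> d\<eta>])
  also have "\<dots> = lie_pullback g \<Phi> (\<lambda>y. C y *\<^sub>R \<xi> y + (\<Sum>c\<in>UNIV. \<eta>bar y $ c *\<^sub>R tang \<Phi> c y)) x a b"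
    using decomp by (intro lie_pullback_cong_open[OF U x]) simp
  also have "\<dots> = lie_pullback g \<Phi> (\<lambda>y. C y *\<^sub>R \<xi> y) x a b
      + (\<Sum>c\<in>UNIV. lie_pullback g \<Phi> (\<lambda>y. \<eta>bar y $ c *\<^sub>R tang \<Phi> c y) x a b)"
    using dC d\<xi> d\<eta>bar dtang by (simp add: lie_pullback_add lie_pullback_sum)
  finally show "pullback2 \<Phi> (lie_metric \<eta> g) x a b
      = 2 * C x * Y x a b + l x a * partial b C x + l x b * partial a C x + lie2 \<eta>bar \<gamma> x a b"
    by (simp add: normal tangential lie2_def sum.distrib)
qed

end
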